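(* Let $A,B$ be real constants and let $(x_n)_{n\ge 0}$ be a solution of $$x_{n+10}=\frac{x_n}{A+B\,x_nx_{n+2}x_{n+4}x_{n+6}x_{n+8}},\qquad n\ge 0,$$ with initial values $x_0,\dots,x_9$, such that all terms are well-defined and nonzero. For $k\in\{0,\dots,9\}$ let $P_k=x_{\tau(k)}x_{\tau(k)+2}x_{\tau(k)+4}x_{\tau(k)+6}x_{\tau(k)+8}$ and for $s\ge 0$ let $m_s=5s+\lfloor k/2\rfloor$. Then for all $k\in\{0,\dots,9\}$ and $n\ge 0$: if $A=1$, $$x_{10n+k}=x_k\prod_{s=0}^{n-1}\frac{1+B\,m_s\,P_k}{1+B\,(m_s+1)\,P_k};$$ if $A\neq 1$, $$x_{10n+k}=x_k\prod_{s=0}^{n-1}\frac{A^{m_s}+\frac{B(1-A^{m_s})}{1-A}P_k}{A^{m_s+1}+\frac{B(1-A^{m_s+1})}{1-A}P_k}.$$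
   Context: $\tau(k)\in\{0,1\}$ denotes the remainder of $k$ upon division by $2$ and $\lfloor\cdot\rfloor$ is the floor function. An empty product equals $1$. *)

theory Defs
  imports Complex_Main
begin

definition tau :: "nat \<Rightarrow> nat" where "tau k = k mod 2"

end

theory Submission
  imports Defs
begin

text \<open>Write \<open>Q n = x n x (n+d) \<cdots> x (n+(p-1)d)\<close>. The recurrence
  \<open>x (n+pd) = x n / (A + B Q n)\<close> gives \<open>Q (n+d) = Q n / (A + B Q n)\<close>, so \<open>1/Q\<close> satisfies
  the affine recurrence \<open>z (n+d) = A z n + B\<close> and is explicit along each residue class
  mod \<open>d\<close>. Since moreover \<open>x (n+pd) / x n = Q (n+d) / Q n\<close>, the value \<open>x (k+pdN)\<close> is
  \<open>x k\<close> times a product of \<open>N\<close> ratios of consecutive values of \<open>1/Q\<close> in the class of \<open>k\<close>.\<close>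

lemma affine_recurrence_closed_form:
  fixes a b :: "'a :: comm_ring_1"
  assumes "\<And>n. f (Suc n) = a * f n + b"
  shows "f n = a ^ n * f 0 + b * (\<Sum>i<n. a ^ i)"
proof (induction n)
  case (Suc n)
  have "f (Suc n) = a * (a ^ n * f 0 + b * (\<Sum>i<n. a ^ i)) + b"
    by (simp add: assms Suc)
  also have "\<dots> = a ^ Suc n * f 0 + b * (1 + a * (\<Sum>i<n. a ^ i))"
    by (simp add: algebra_simps)
  also have "\<dots> = a ^ Suc n * f 0 + b * (\<Sum>i<Suc n. a ^ i)"
    by (simp only: sum.lessThan_Suc_shift sum_distrib_left power_Suc power_0)
  finally show ?case .
qed simp

lemma ratio_clear_denominator:
  fixes a b c e :: "'a :: field"
  assumes "c \<noteq> 0"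
  shows "(a / c + b) / (e / c + f) = (a + b * c) / (e + f * c)"
proof -
  have "a / c + b = (a + b * c) / c" "e / c + f = (e + f * c) / c"
    using assms by (simp_all add: field_simps)
  then show ?thesis
    using assms by simp
qed

definition strided_prod :: "(nat \<Rightarrow> 'a :: comm_monoid_mult) \<Rightarrow> nat \<Rightarrow> nat \<Rightarrow> nat \<Rightarrow> 'a" where
  "strided_prod x d p n = (\<Prod>i<p. x (n + d * i))"

locale product_recurrence =
  fixes A B :: real and x :: "nat \<Rightarrow> real" and d p :: nat
  assumes nonzero: "\<And>n. x n \<noteq> 0"
    and denom_nonzero: "\<And>n. A + B * strided_prod x d p n \<noteq> 0"
    and recurrence: "\<And>n. x (n + d * p) = x n / (A + B * strided_prod x d p n)"
begin

abbreviation Q :: "nat \<Rightarrow> real" where "Q \<equiv> strided_prod x d p"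

lemma Q_nonzero: "Q n \<noteq> 0"
  by (simp add: strided_prod_def nonzero)

lemma Q_mult_step: "Q n * x (n + d * p) = x n * Q (n + d)"
proof -
  have "Q n * x (n + d * p) = (\<Prod>i<Suc p. x (n + d * i))"
    by (simp add: strided_prod_def)
  also have "\<dots> = x n * (\<Prod>i<p. x (n + d * Suc i))"
    by (simp only: prod.lessThan_Suc_shift) simp
  also have "\<dots> = x n * Q (n + d)"
    by (simp add: strided_prod_def algebra_simps)
  finally show ?thesis .
qed

lemma step_ratio: "x (n + d * p) = x n * (Q (n + d) / Q n)"
  using Q_mult_step[of n] Q_nonzero[of n] by (simp add: field_simps)

lemma inverse_Q_step: "1 / Q (n + d) = A * (1 / Q n) + B"
proof -
  have "x n * Q (n + d) = x n * (Q n / (A + B * Q n))"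
    using Q_mult_step[of n] by (simp add: recurrence mult.commute)
  then have "Q (n + d) = Q n / (A + B * Q n)"
    using nonzero[of n] mult_left_cancel by blast
  then have "1 / Q (n + d) = (A + B * Q n) / Q n"
    by simp
  then show ?thesis
    using Q_nonzero[of n] by (simp add: add_divide_distrib)
qed

lemma inverse_Q_closed_form: "1 / Q (r + d * j) = A ^ j / Q r + B * (\<Sum>i<j. A ^ i)"
proof -
  have "1 / Q (r + d * Suc i) = A * (1 / Q (r + d * i)) + B" for i
    using inverse_Q_step[of "r + d * i"] by (simp add: ac_simps)
  then have "1 / Q (r + d * j) = A ^ j * (1 / Q (r + d * 0)) + B * (\<Sum>i<j. A ^ i)"
    by (rule affine_recurrence_closed_form)
  then show ?thesis
    by simp
qed

lemma x_period_prod: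
  "x (r + d * p * N) = x r * (\<Prod>s<N. Q (r + d * p * s + d) / Q (r + d * p * s))"
proof (induction N)
  case (Suc N)
  have "x (r + d * p * Suc N) = x ((r + d * p * N) + d * p)"
    by (simp add: algebra_simps)
  then show ?case
    by (simp add: step_ratio Suc)
qed simp

lemma inverse_Q_residue_class:
  "1 / Q (k + d * j) = A ^ (j + k div d) / Q (k mod d) + B * (\<Sum>i<j + k div d. A ^ i)"
proof -
  have "k + d * j = k mod d + d * (j + k div d)"
    using div_mult_mod_eq[of k d] by (simp add: algebra_simps)
  then show ?thesis
    by (simp only: inverse_Q_closed_form)
qed

lemma x_closed_form:
  fixes k N :: nat
  defines "P \<equiv> Q (k mod d)" and "m \<equiv> \<lambda>s. p * s + k div d"
    and "S \<equiv> \<lambda>j. \<Sum>i<j. A ^ i"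
  shows "x (d * p * N + k) =
    x k * (\<Prod>s<N. (A ^ m s + B * S (m s) * P) / (A ^ (m s + 1) + B * S (m s + 1) * P))"
proof -
  have ratio: "Q (k + d * p * s + d) / Q (k + d * p * s)
      = (A ^ m s + B * S (m s) * P) / (A ^ (m s + 1) + B * S (m s + 1) * P)" for s
  proof -
    have "Q (k + d * p * s + d) / Q (k + d * p * s)
        = (1 / Q (k + d * (p * s))) / (1 / Q (k + d * (p * s + 1)))"
      by (simp add: algebra_simps)
    also have "\<dots> = (A ^ m s / P + B * S (m s)) / (A ^ (m s + 1) / P + B * S (m s + 1))"
      by (simp only: inverse_Q_residue_class m_def S_def P_def add.commute[of 1] add.assoc)
    also have "\<dots> = (A ^ m s + B * S (m s) * P) / (A ^ (m s + 1) + B * S (m s + 1) * P)"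
      using Q_nonzero[of "k mod d"] by (simp add: P_def ratio_clear_denominator)
    finally show ?thesis .
  qed
  have "x (d * p * N + k) = x (k + d * p * N)"
    by (simp add: add.commute)
  also have "\<dots> = x k * (\<Prod>s<N. Q (k + d * p * s + d) / Q (k + d * p * s))"
    by (rule x_period_prod)
  finally show ?thesis
    by (simp only: ratio)
qed

end

theorem mainTheorem2:
  fixes A B :: real and x :: "nat \<Rightarrow> real"
  assumes wd: "\<And>n. A + B * x n * x (n+2) * x (n+4) * x (n+6) * x (n+8) \<noteq> 0"
    and rec: "\<And>n. x (n+10) = x n / (A + B * x n * x (n+2) * x (n+4) * x (n+6) * x (n+8))"
    and nz: "\<And>n. x n \<noteq> 0"
  shows "\<forall>k\<in>{0..9}. \<forall>n::nat.
    (let P = x (tau k) * x (tau k + 2) * x (tau k + 4) * x (tau k + 6) * x (tau k + 8);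
         m = (\<lambda>s::nat. 5 * s + k div 2) in
     (A = 1 \<longrightarrow> x (10*n + k) = x k * (\<Prod>s<n. (1 + B * real (m s) * P) / (1 + B * (real (m s) + 1) * P)))
   \<and> (A \<noteq> 1 \<longrightarrow> x (10*n + k) = x k * (\<Prod>s<n.
        (A ^ m s + B * (1 - A ^ m s) / (1 - A) * P) /
        (A ^ (m s + 1) + B * (1 - A ^ (m s + 1)) / (1 - A) * P))))"
proof -
  have window: "strided_prod x 2 5 n = x n * x (n+2) * x (n+4) * x (n+6) * x (n+8)" for n
    by (simp add: strided_prod_def numeral_eq_Suc mult_ac)
  interpret product_recurrence A B x 2 5
  proof
    show "x n \<noteq> 0" for n by (rule nz)
    show "A + B * strided_prod x 2 5 n \<noteq> 0" for n
      using wd[of n] by (simp add: window mult.assoc)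
    show "x (n + 2 * 5) = x n / (A + B * strided_prod x 2 5 n)" for n
      using rec[of n] by (simp add: window mult.assoc)
  qed
  define P where "P k = x (tau k) * x (tau k + 2) * x (tau k + 4) * x (tau k + 6) * x (tau k + 8)" for k
  define m where "m k s = 5 * s + k div 2" for k s :: nat
  have "x (10 * n + k) = x k * (\<Prod>s<n.
      (A ^ m k s + B * (\<Sum>i<m k s. A ^ i) * P k) / (A ^ (m k s + 1) + B * (\<Sum>i<m k s + 1. A ^ i) * P k))"
    for k n
    using x_closed_form[where k = k and N = n] by (simp add: P_def m_def tau_def window)
  then show ?thesis
    unfolding Let_def P_def[symmetric] m_def[symmetric] sum_gp_strict
    by (simp add: add.commute)
qed

end
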